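(* The set of functions $\{\sigma_\omega\}_{\omega\in D}$ is linearly independent as a set of real-valued functions on the set of all metabolic Seifert matrices. That is, if $\omega_1,\dots,\omega_N\in D$ are distinct and $c_1,\dots,c_N\in\mathbb{R}$ satisfy $\sum_i c_i\sigma_{\omega_i}(V)=0$ for every metabolic Seifert matrix $V$, then all $c_i=0$.
   Context: A Seifert matrix is a square integral matrix $V$ with $\det(V-V^T)=\pm1$; it has even size $2g$. It is metabolic if there is a direct summand $L\subset\mathbb{Z}^{2g}$ of rank $g$ with $x^TVy=0$ for all $x,y\in L$. For a unit complex number $\omega$, $\sigma_\omega(V)$ is the signature of the Hermitian matrix $(1-\omega)V+(1-\bar\omega)V^T$. The Alexander polynomial of $V$ is $\Delta_V(t)=\det(V-tV^T)$. $S$ is the set of unit complex numbers with positive imaginary part, and $D\subset S$ is the set of all $\omega\in S$ that are roots of $\Delta_V(t)$ for some Seifert matrix $V$ (equivalently, roots of some integral polynomial $\Delta$ with $\Delta(t^{-1})=\pm t^j\Delta(t)$ for some $j$ and $\Delta(1)=\pm1$). *)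

theory Defs
  imports "Jordan_Normal_Form.Matrix" "Jordan_Normal_Form.Determinant" "Jordan_Normal_Form.Char_Poly"
begin

definition seifert_matrix :: "int mat \<Rightarrow> bool" where
  "seifert_matrix V \<longleftrightarrow> dim_row V = dim_col V \<and> det (V - transpose_mat V) \<in> {1, -1}"

definition int_submodule :: "nat \<Rightarrow> int vec set \<Rightarrow> bool" where
  "int_submodule n L \<longleftrightarrow> L \<subseteq> carrier_vec n \<and> 0\<^sub>v n \<in> L \<and>
     (\<forall>x\<in>L. \<forall>y\<in>L. x + y \<in> L) \<and> (\<forall>c x. x \<in> L \<longrightarrow> c \<cdot>\<^sub>v x \<in> L)"

definition int_comb :: "nat \<Rightarrow> int vec list \<Rightarrow> (nat \<Rightarrow> int) \<Rightarrow> int vec" where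
  "int_comb n vs c = vec n (\<lambda>j. \<Sum>i<length vs. c i * (vs ! i) $ j)"

definition free_of_rank :: "nat \<Rightarrow> nat \<Rightarrow> int vec set \<Rightarrow> bool" where
  "free_of_rank n g L \<longleftrightarrow> (\<exists>vs. length vs = g \<and> set vs \<subseteq> carrier_vec n \<and>
     L = range (int_comb n vs) \<and>
     (\<forall>c. int_comb n vs c = 0\<^sub>v n \<longrightarrow> (\<forall>i<g. c i = 0)))"

definition direct_summand :: "nat \<Rightarrow> int vec set \<Rightarrow> bool" where
  "direct_summand n L \<longleftrightarrow> int_submodule n L \<and> (\<exists>M. int_submodule n M \<and> L \<inter> M = {0\<^sub>v n} \<and>
     (\<forall>x\<in>carrier_vec n. \<exists>l\<in>L. \<exists>m\<in>M. x = l + m))"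

definition metabolic :: "int mat \<Rightarrow> bool" where
  "metabolic V \<longleftrightarrow> (\<exists>g L. dim_row V = 2 * g \<and> dim_col V = 2 * g \<and>
     direct_summand (2 * g) L \<and> free_of_rank (2 * g) g L \<and>
     (\<forall>x\<in>L. \<forall>y\<in>L. x \<bullet> (V *\<^sub>v y) = 0))"

definition hermitian_signature :: "complex mat \<Rightarrow> int" where
  "hermitian_signature A =
     int (\<Sum>x\<in>{x. poly (char_poly A) x = 0 \<and> Im x = 0 \<and> Re x > 0}. order x (char_poly A))
   - int (\<Sum>x\<in>{x. poly (char_poly A) x = 0 \<and> Im x = 0 \<and> Re x < 0}. order x (char_poly A))"

definition tristram_levine :: "complex \<Rightarrow> int mat \<Rightarrow> int" where
  "tristram_levine \<omega> V =
     (let W = map_mat of_int V in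
      hermitian_signature ((1 - \<omega>) \<cdot>\<^sub>m W + (1 - cnj \<omega>) \<cdot>\<^sub>m transpose_mat W))"

definition alexander_poly :: "int mat \<Rightarrow> int poly" where
  "alexander_poly V = det (map_mat (\<lambda>a. [:a:]) V - map_mat (\<lambda>a. [:0, a:]) (transpose_mat V))"

definition D_set :: "complex set" where
  "D_set = {\<omega>. cmod \<omega> = 1 \<and> Im \<omega> > 0 \<and>
     (\<exists>V. seifert_matrix V \<and> poly (map_poly of_int (alexander_poly V)) \<omega> = 0)}"

end

theory Submission
  imports Defs "Jordan_Normal_Form.Schur_Decomposition"
begin

(* Write w = exp(i t) with 0 < t < pi. For a Seifert matrix V and integers p, q > 0 let
   W = [[0, D], [D, P]] with D = diag(V, V) and P = [[p I, q I], [-q I, p I]]. Then W is again a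
   Seifert matrix, and it is metabolic because its upper left quarter vanishes. Computing the
   characteristic polynomial of its Tristram-Levine form blockwise gives
     sigma_w(W) = N_w(V) * (1 + sgn (p/q - cot (t/2))),
   where N_w(V) is the nullity of (1 - w) V + (1 - conj w) V^T; it is positive when w is a root
   of the Alexander polynomial of V. Given a vanishing combination with some c_i nonzero, take
   among those w_i the one with the smallest cot (t_i/2), a V whose Alexander polynomial vanishes
   there, and p/q strictly between this value and all the other ones: then only that term of the
   combination survives, and it equals 2 c_i N_w(V), so c_i = 0 after all. *)

definition diag2 :: "'a::zero mat \<Rightarrow> 'a mat" where
  "diag2 A = four_block_mat A (0\<^sub>m (dim_row A) (dim_col A)) (0\<^sub>m (dim_row A) (dim_col A)) A"

definition scalar_block :: "nat \<Rightarrow> 'a::comm_ring_1 \<Rightarrow> 'a \<Rightarrow> 'a \<Rightarrow> 'a \<Rightarrow> 'a mat" where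
  "scalar_block n s t u v = four_block_mat (s \<cdot>\<^sub>m 1\<^sub>m n) (t \<cdot>\<^sub>m 1\<^sub>m n) (u \<cdot>\<^sub>m 1\<^sub>m n) (v \<cdot>\<^sub>m 1\<^sub>m n)"

definition metabolic_block :: "'a::comm_ring_1 mat \<Rightarrow> 'a \<Rightarrow> 'a \<Rightarrow> 'a mat" where
  "metabolic_block X a b = four_block_mat (0\<^sub>m (dim_row X + dim_row X) (dim_row X + dim_row X))
     (diag2 X) (diag2 X) (scalar_block (dim_row X) a b (- b) a)"

lemma diag2_carrier [simp]: "A \<in> carrier_mat n n \<Longrightarrow> diag2 A \<in> carrier_mat (n + n) (n + n)"
  unfolding diag2_def by auto

lemma scalar_block_carrier [simp]: "scalar_block n s t u v \<in> carrier_mat (n + n) (n + n)"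
  unfolding scalar_block_def by auto

lemma metabolic_block_carrier [simp]:
  "X \<in> carrier_mat n n \<Longrightarrow> metabolic_block X a b \<in> carrier_mat (n + n + (n + n)) (n + n + (n + n))"
  unfolding metabolic_block_def by auto

lemma smult_one_mult_mat [simp]:
  fixes A :: "'a::comm_ring_1 mat"
  shows "A \<in> carrier_mat n m \<Longrightarrow> (s \<cdot>\<^sub>m 1\<^sub>m n) * A = s \<cdot>\<^sub>m A"
  by (subst mult_smult_assoc_mat[of _ n n]) auto

lemma diag2_scalar_block_comm:
  fixes A :: "'a::comm_ring_1 mat"
  assumes "A \<in> carrier_mat n n"
  shows "diag2 A * scalar_block n s t u v = scalar_block n s t u v * diag2 A"
  using assms unfolding diag2_def scalar_block_def
  by (subst (1 2) mult_four_block_mat[of _ n n]) (auto simp: mult_smult_distrib)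

lemma diag2_mult:
  fixes A :: "'a::comm_ring_1 mat"
  assumes "A \<in> carrier_mat n n" and "B \<in> carrier_mat n n"
  shows "diag2 A * diag2 B = diag2 (A * B)"
  using assms unfolding diag2_def by (subst mult_four_block_mat[of _ n n]) auto

lemma smult_scalar_block: "c \<cdot>\<^sub>m scalar_block n s t u v = scalar_block n (c * s) (c * t) (c * u) (c * v)"
  unfolding scalar_block_def by (rule eq_matI) auto

lemma scalar_block_minus_diag2:
  fixes M :: "'a::comm_ring_1 mat"
  assumes "M \<in> carrier_mat n n"
  shows "scalar_block n s t u v - diag2 M =
    four_block_mat (s \<cdot>\<^sub>m 1\<^sub>m n - M) (t \<cdot>\<^sub>m 1\<^sub>m n) (u \<cdot>\<^sub>m 1\<^sub>m n) (v \<cdot>\<^sub>m 1\<^sub>m n - M)"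
  using assms unfolding scalar_block_def diag2_def by (intro eq_matI) auto

lemma smult_one_minus_mult:
  fixes M :: "'a::comm_ring_1 mat"
  assumes M: "M \<in> carrier_mat n n"
  shows "(x \<cdot>\<^sub>m 1\<^sub>m n - M) * (y \<cdot>\<^sub>m 1\<^sub>m n - M) = (x * y) \<cdot>\<^sub>m 1\<^sub>m n - (x + y) \<cdot>\<^sub>m M + M * M"
proof -
  have "(x \<cdot>\<^sub>m 1\<^sub>m n - M) * (y \<cdot>\<^sub>m 1\<^sub>m n - M) = (x \<cdot>\<^sub>m 1\<^sub>m n) * (y \<cdot>\<^sub>m 1\<^sub>m n - M) - M * (y \<cdot>\<^sub>m 1\<^sub>m n - M)"
    using M by (subst minus_mult_distrib_mat[of _ n n]) auto
  also have "(x \<cdot>\<^sub>m 1\<^sub>m n) * (y \<cdot>\<^sub>m 1\<^sub>m n - M) = (x * y) \<cdot>\<^sub>m 1\<^sub>m n - x \<cdot>\<^sub>m M"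
    using M by (subst mult_minus_distrib_mat[of _ n n]) (auto simp: mult_smult_distrib mult_smult_assoc_mat)
  also have "M * (y \<cdot>\<^sub>m 1\<^sub>m n - M) = y \<cdot>\<^sub>m M - M * M"
    using M by (subst mult_minus_distrib_mat[of _ n n]) (auto simp: mult_smult_distrib)
  finally show ?thesis using M by (intro eq_matI) (auto simp: algebra_simps)
qed

lemma det_scalar_four_block:
  fixes M :: "'a::idom mat"
  assumes M: "M \<in> carrier_mat n n" and xy: "x * y = \<alpha> * \<alpha> - \<beta> * \<gamma>" "x + y = \<alpha> + \<alpha>"
  shows "det (four_block_mat (\<alpha> \<cdot>\<^sub>m 1\<^sub>m n - M) (\<beta> \<cdot>\<^sub>m 1\<^sub>m n) (\<gamma> \<cdot>\<^sub>m 1\<^sub>m n) (\<alpha> \<cdot>\<^sub>m 1\<^sub>m n - M)) =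
    det (x \<cdot>\<^sub>m 1\<^sub>m n - M) * det (y \<cdot>\<^sub>m 1\<^sub>m n - M)"
proof -
  have "\<alpha> \<cdot>\<^sub>m 1\<^sub>m n - M \<in> carrier_mat n n" using M by auto
  hence "det (four_block_mat (\<alpha> \<cdot>\<^sub>m 1\<^sub>m n - M) (\<beta> \<cdot>\<^sub>m 1\<^sub>m n) (\<gamma> \<cdot>\<^sub>m 1\<^sub>m n) (\<alpha> \<cdot>\<^sub>m 1\<^sub>m n - M)) =
      det ((\<alpha> \<cdot>\<^sub>m 1\<^sub>m n - M) * (\<alpha> \<cdot>\<^sub>m 1\<^sub>m n - M) - (\<beta> \<cdot>\<^sub>m 1\<^sub>m n) * (\<gamma> \<cdot>\<^sub>m 1\<^sub>m n))"
    using M by (intro det_four_block_mat[of _ n]) auto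
  also have "(\<alpha> \<cdot>\<^sub>m 1\<^sub>m n - M) * (\<alpha> \<cdot>\<^sub>m 1\<^sub>m n - M) - (\<beta> \<cdot>\<^sub>m 1\<^sub>m n) * (\<gamma> \<cdot>\<^sub>m 1\<^sub>m n) =
      (x \<cdot>\<^sub>m 1\<^sub>m n - M) * (y \<cdot>\<^sub>m 1\<^sub>m n - M)"
    unfolding smult_one_minus_mult[OF M] using M by (intro eq_matI) (auto simp: xy algebra_simps)
  also have "det \<dots> = det (x \<cdot>\<^sub>m 1\<^sub>m n - M) * det (y \<cdot>\<^sub>m 1\<^sub>m n - M)"
    using M by (intro det_mult[of _ n]) auto
  finally show ?thesis .
qed

lemma det_smult_one_minus_const_mat:
  fixes Y :: "'a::comm_ring_1 mat"
  assumes Y: "Y \<in> carrier_mat n n"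
  shows "det (\<mu> \<cdot>\<^sub>m 1\<^sub>m n - map_mat (\<lambda>x. [:x:]) Y) = char_poly Y \<circ>\<^sub>p \<mu>"
proof -
  have "\<mu> \<cdot>\<^sub>m 1\<^sub>m n - map_mat (\<lambda>x. [:x:]) Y = map_mat (\<lambda>q. q \<circ>\<^sub>p \<mu>) (char_poly_matrix Y)"
    using Y unfolding char_poly_matrix_def by (intro eq_matI) (auto simp: pcompose_pCons)
  also have "det \<dots> = char_poly Y \<circ>\<^sub>p \<mu>"
    unfolding char_poly_def by (rule comm_ring_hom.hom_det[OF pcompose_hom.comm_ring_hom_axioms])
  finally show ?thesis .
qed

text \<open>Two block eliminations reduce the characteristic polynomial to
  \<open>det ((t (t - a) - X\<^sup>2)\<^sup>2 + (t b)\<^sup>2)\<close>, which factors because \<open>b\<^sup>2 = - s\<^sup>2\<close>.\<close>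
lemma char_poly_metabolic_block:
  fixes X :: "'a::idom mat"
  assumes X: "X \<in> carrier_mat n n" and s: "s * s = - (b * b)"
  shows "char_poly (metabolic_block X a b) =
    (char_poly (X * X) \<circ>\<^sub>p [:0, - (a + s), 1:]) * (char_poly (X * X) \<circ>\<^sub>p [:0, - (a - s), 1:])"
proof -
  define K where "K = [:-1:] \<cdot>\<^sub>m map_mat (\<lambda>x. [:x:]) X"
  define XX where "XX = map_mat (\<lambda>x. [:x:]) (X * X)"
  define D where "D = scalar_block n [:- a, 1:] [:- b:] [:b:] [:- a, 1:]"
  define \<alpha> where "\<alpha> = [:0, 1:] * [:- a, 1:]"
  define \<beta> where "\<beta> = [:0, 1:] * [:- b:]"
  define \<gamma> where "\<gamma> = [:0, 1:] * [:b:]"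
  have K: "K \<in> carrier_mat n n" and XX: "XX \<in> carrier_mat n n" and D: "D \<in> carrier_mat (n + n) (n + n)"
    using X unfolding K_def XX_def D_def by auto
  have "K * K = [:-1:] \<cdot>\<^sub>m ([:-1:] \<cdot>\<^sub>m (map_mat (\<lambda>x. [:x:]) X * map_mat (\<lambda>x. [:x:]) X))"
    unfolding K_def using X by (simp add: mult_smult_assoc_mat[of _ n n] mult_smult_distrib[of _ n n _ n])
  also have "\<dots> = XX"
    unfolding XX_def map_poly_mult(1)[OF X X] using X by (intro eq_matI) auto
  finally have KK: "K * K = XX" .
  have "char_poly_matrix (metabolic_block X a b) = four_block_mat ([:0, 1:] \<cdot>\<^sub>m 1\<^sub>m (n + n)) (diag2 K) (diag2 K) D"
    using X unfolding char_poly_matrix_def metabolic_block_def diag2_def scalar_block_def K_def D_def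
    by (intro eq_matI) auto
  hence "char_poly (metabolic_block X a b) = det (([:0, 1:] \<cdot>\<^sub>m 1\<^sub>m (n + n)) * D - diag2 K * diag2 K)"
    unfolding char_poly_def
    by (auto intro!: det_four_block_mat[of _ "n + n"] simp: K D D_def diag2_scalar_block_comm[OF K])
  also have "([:0, 1:] \<cdot>\<^sub>m 1\<^sub>m (n + n)) * D - diag2 K * diag2 K =
     four_block_mat (\<alpha> \<cdot>\<^sub>m 1\<^sub>m n - XX) (\<beta> \<cdot>\<^sub>m 1\<^sub>m n) (\<gamma> \<cdot>\<^sub>m 1\<^sub>m n) (\<alpha> \<cdot>\<^sub>m 1\<^sub>m n - XX)"
    unfolding smult_one_mult_mat[OF D] diag2_mult[OF K K] KK
    unfolding D_def smult_scalar_block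
      scalar_block_minus_diag2[OF XX] \<alpha>_def \<beta>_def \<gamma>_def ..
  also have "det \<dots> = det ([:0, - (a + s), 1:] \<cdot>\<^sub>m 1\<^sub>m n - XX) * det ([:0, - (a - s), 1:] \<cdot>\<^sub>m 1\<^sub>m n - XX)"
    using s unfolding \<alpha>_def \<beta>_def \<gamma>_def by (intro det_scalar_four_block[OF XX]) (simp_all add: algebra_simps)
  also have "\<dots> = (char_poly (X * X) \<circ>\<^sub>p [:0, - (a + s), 1:]) * (char_poly (X * X) \<circ>\<^sub>p [:0, - (a - s), 1:])"
    using X unfolding XX_def by (simp add: det_smult_one_minus_const_mat[of _ n])
  finally show ?thesis .
qed

lemma det_diag2:
  fixes M :: "'a::idom mat"
  assumes "M \<in> carrier_mat n n"
  shows "det (diag2 M) = det M * det M"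
  using assms unfolding diag2_def by (subst det_four_block_mat_lower_left_zero[of _ n _ n]) auto

lemma det_metabolic_block:
  fixes X :: "'a::idom mat"
  assumes X: "X \<in> carrier_mat n n"
  shows "det (metabolic_block X a b) = det X ^ 4"
proof -
  have XX: "X * X \<in> carrier_mat n n" using X by auto
  have "det (metabolic_block X a b) = det (0\<^sub>m (n + n) (n + n) * scalar_block n a b (- b) a - diag2 X * diag2 X)"
    using X unfolding metabolic_block_def
    by (auto intro!: det_four_block_mat[of _ "n + n"] simp: diag2_scalar_block_comm[OF X])
  also have "0\<^sub>m (n + n) (n + n) * scalar_block n a b (- b) a - diag2 X * diag2 X = (- 1) \<cdot>\<^sub>m diag2 (X * X)"
    using diag2_carrier[OF XX] unfolding diag2_mult[OF X X] left_mult_zero_mat[OF scalar_block_carrier]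
    by (intro eq_matI) auto
  also have "det \<dots> = det (X * X) * det (X * X)"
    using diag2_carrier[OF XX] by (simp add: det_diag2[OF XX] flip: mult_2)
  finally show ?thesis using X by (simp add: det_mult[of _ n] power4_eq_xxxx)
qed

lemma upper_triangular_mult:
  fixes A B :: "'a::comm_ring_1 mat"
  assumes A: "A \<in> carrier_mat n n" "upper_triangular A" and B: "B \<in> carrier_mat n n" "upper_triangular B"
  shows "upper_triangular (A * B)"
proof (intro upper_triangularI)
  fix i j assume ji: "j < i" and i: "i < dim_row (A * B)"
  have "A $$ (i, k) * B $$ (k, j) = 0" if "k < n" for k
    using A B ji i that by (cases "k < i") (auto simp: upper_triangular_def)
  thus "(A * B) $$ (i, j) = 0"
    using A B ji i by (auto simp: scalar_prod_def intro!: sum.neutral)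
qed

lemma diag_mat_mult_upper_triangular:
  fixes A B :: "'a::comm_ring_1 mat"
  assumes A: "A \<in> carrier_mat n n" "upper_triangular A" and B: "B \<in> carrier_mat n n" "upper_triangular B"
  shows "diag_mat (A * B) = map2 (*) (diag_mat A) (diag_mat B)"
proof (rule nth_equalityI)
  show "length (diag_mat (A * B)) = length (map2 (*) (diag_mat A) (diag_mat B))"
    using A B by (simp add: diag_mat_def)
next
  fix i assume "i < length (diag_mat (A * B))"
  hence i: "i < n" using A B by (simp add: diag_mat_def)
  have "A $$ (i, k) * B $$ (k, i) = 0" if "k < n" "k \<noteq> i" for k
    using A B i that by (cases "k < i") (auto simp: upper_triangular_def)
  hence "(A * B) $$ (i, i) = A $$ (i, i) * B $$ (i, i)"
    using A B i by (auto simp: scalar_prod_def sum.remove[of "{0..<n}" i] intro!: sum.neutral)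
  thus "diag_mat (A * B) ! i = map2 (*) (diag_mat A) (diag_mat B) ! i"
    using A B i by (simp add: diag_mat_def)
qed

lemma char_poly_square_factorized:
  fixes X :: "complex mat"
  assumes X: "X \<in> carrier_mat n n"
  obtains ds where "char_poly X = (\<Prod>d\<leftarrow>ds. [:- d, 1:])" and "char_poly (X * X) = (\<Prod>d\<leftarrow>ds. [:- (d * d), 1:])"
proof -
  obtain ds where cp: "char_poly X = (\<Prod>d\<leftarrow>ds. [:- d, 1:])"
    using char_poly_factorized[OF X] by blast
  obtain B P Q where "schur_decomposition X ds = (B, P, Q)"
    by (cases "schur_decomposition X ds") auto
  from schur_decomposition[OF X cp this]
  have sim: "similar_mat_wit X B P Q" and ut: "upper_triangular B" and diag: "diag_mat B = ds"
    by auto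
  have B: "B \<in> carrier_mat n n" using similar_mat_witD2[OF X sim] by auto
  have "similar_mat (X ^\<^sub>m 2) (B ^\<^sub>m 2)"
    using similar_mat_wit_pow[OF sim] unfolding similar_mat_def by blast
  hence "char_poly (X * X) = char_poly (B * B)"
    using X B by (intro char_poly_similar) (simp add: numeral_2_eq_2)
  also have "\<dots> = (\<Prod>d\<leftarrow>diag_mat (B * B). [:- d, 1:])"
    using B ut by (intro char_poly_upper_triangular[of _ n]) (auto intro: upper_triangular_mult)
  also have "\<dots> = (\<Prod>d\<leftarrow>ds. [:- (d * d), 1:])"
    unfolding diag_mat_mult_upper_triangular[OF B ut B ut] diag by (induction ds) auto
  finally show ?thesis using cp that by blast
qed

definition hermitian_mat :: "complex mat \<Rightarrow> bool" where
  "hermitian_mat X \<longleftrightarrow> (\<forall>i < dim_row X. \<forall>j < dim_row X. X $$ (j, i) = cnj (X $$ (i, j)))"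

lemma hermitian_mat_eigenvalue_real:
  assumes X: "X \<in> carrier_mat n n" and herm: "hermitian_mat X" and root: "poly (char_poly X) d = 0"
  shows "d \<in> \<real>"
proof -
  obtain v where "eigenvector X v d"
    using root eigenvalue_root_char_poly[OF X] unfolding eigenvalue_def by auto
  hence v: "v \<in> carrier_vec n" and v0: "v \<noteq> 0\<^sub>v n" and Xv: "X *\<^sub>v v = d \<cdot>\<^sub>v v"
    unfolding eigenvector_def using X by auto
  define s where "s = (\<Sum>i<n. \<Sum>j<n. cnj (v $ i) * X $$ (i, j) * v $ j)"
  define T where "T = (\<Sum>i<n. (cmod (v $ i))\<^sup>2)"
  have "s = (\<Sum>i<n. cnj (v $ i) * (X *\<^sub>v v) $ i)"
    unfolding s_def using X v
    by (intro sum.cong refl) (auto simp: scalar_prod_def sum_distrib_left lessThan_atLeast0 ac_simps)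
  also have "\<dots> = d * (\<Sum>i<n. cnj (v $ i) * v $ i)"
    unfolding Xv using v by (auto simp: sum_distrib_left mult.left_commute intro!: sum.cong)
  also have "(\<Sum>i<n. cnj (v $ i) * v $ i) = of_real T"
    unfolding T_def of_real_sum by (intro sum.cong refl) (subst complex_norm_square, rule mult.commute)
  finally have s: "s = d * of_real T" .
  have "cnj s = (\<Sum>i<n. \<Sum>j<n. v $ i * cnj (X $$ (i, j)) * cnj (v $ j))"
    unfolding s_def by simp
  also have "\<dots> = (\<Sum>i<n. \<Sum>j<n. v $ i * X $$ (j, i) * cnj (v $ j))"
    using herm X unfolding hermitian_mat_def by (intro sum.cong refl) (metis carrier_matD(1) lessThan_iff)
  also have "\<dots> = s"
    unfolding s_def by (subst sum.swap) (simp add: ac_simps)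
  finally have "cnj s = s" .
  moreover obtain i where "i < n" and "v $ i \<noteq> 0"
    using v v0 by (metis eq_vecI carrier_vecD index_zero_vec)
  hence "T > 0" unfolding T_def by (intro sum_pos2[of _ i]) auto
  ultimately have "cnj d = d" using s by simp
  thus ?thesis by (simp add: Reals_cnj_iff)
qed

definition root_count :: "('a::idom \<Rightarrow> bool) \<Rightarrow> 'a poly \<Rightarrow> nat" where
  "root_count P p = (\<Sum>x | poly p x = 0 \<and> P x. Polynomial.order x p)"

lemma root_count_mult:
  assumes "p \<noteq> 0" and "q \<noteq> 0"
  shows "root_count P (p * q) = root_count P p + root_count P q"
proof -
  let ?R = "\<lambda>p. {x. poly p x = 0 \<and> P x}"
  have pq: "p * q \<noteq> 0" using assms by simp
  have fin: "finite (?R (p * q))" using poly_roots_finite[OF pq] by (rule finite_subset[rotated]) auto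
  have "root_count P (p * q) = (\<Sum>x\<in>?R (p * q). Polynomial.order x p) + (\<Sum>x\<in>?R (p * q). Polynomial.order x q)"
    unfolding root_count_def order_mult[OF pq] sum.distrib ..
  also have "(\<Sum>x\<in>?R (p * q). Polynomial.order x p) = root_count P p"
    unfolding root_count_def by (rule sum.mono_neutral_right[OF fin]) (auto simp: order_root)
  also have "(\<Sum>x\<in>?R (p * q). Polynomial.order x q) = root_count P q"
    unfolding root_count_def by (rule sum.mono_neutral_right[OF fin]) (auto simp: order_root)
  finally show ?thesis .
qed

lemma root_count_linear: "root_count P [:- r, 1:] = (if P r then 1 else 0)"
proof -
  have "{x. poly [:- r, 1:] x = 0 \<and> P x} = (if P r then {r} else {})" by auto
  moreover have "Polynomial.order r [:- r, 1:] = 1" using order_power_n_n[of r 1] by simp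
  ultimately show ?thesis unfolding root_count_def by auto
qed

definition poly_signature :: "complex poly \<Rightarrow> int" where
  "poly_signature p = int (root_count (\<lambda>x. Im x = 0 \<and> Re x > 0) p) - int (root_count (\<lambda>x. Im x = 0 \<and> Re x < 0) p)"

lemma hermitian_signature_char_poly: "hermitian_signature A = poly_signature (char_poly A)"
  unfolding hermitian_signature_def poly_signature_def root_count_def by (simp add: conj_assoc)

lemma poly_signature_mult: "p \<noteq> 0 \<Longrightarrow> q \<noteq> 0 \<Longrightarrow> poly_signature (p * q) = poly_signature p + poly_signature q"
  unfolding poly_signature_def by (simp add: root_count_mult)

definition int_sgn :: "real \<Rightarrow> int" where
  "int_sgn x = (if x > 0 then 1 else if x < 0 then - 1 else 0)"

lemma int_sgn_mult_pos: "c > 0 \<Longrightarrow> int_sgn (c * x) = int_sgn x"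
  unfolding int_sgn_def by (simp add: zero_less_mult_iff mult_less_0_iff)

lemma poly_signature_linear: "poly_signature [:- of_real r, 1:] = int_sgn r"
  unfolding poly_signature_def root_count_linear int_sgn_def by auto

lemma poly_signature_quadratic:
  fixes d \<mu> :: real
  shows "poly_signature [:- (of_real d * of_real d), - of_real \<mu>, 1:] = (if d = 0 then int_sgn \<mu> else 0)"
proof -
  define r where "r = sqrt (\<mu>\<^sup>2 + 4 * d\<^sup>2)"
  have r2: "r\<^sup>2 = \<mu>\<^sup>2 + 4 * d\<^sup>2" and "r \<ge> 0" unfolding r_def by simp_all
  define r\<^sub>1 r\<^sub>2 where "r\<^sub>1 = (\<mu> + r) / 2" and "r\<^sub>2 = (\<mu> - r) / 2"
  have "r\<^sub>1 * r\<^sub>2 = - (d * d)" and "r\<^sub>1 + r\<^sub>2 = \<mu>"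
    unfolding r\<^sub>1_def r\<^sub>2_def using r2 by (simp_all add: field_simps power2_eq_square)
  hence factor: "[:- (of_real d * of_real d), - of_real \<mu>, 1:] = [:- of_real r\<^sub>1, 1:] * [:- of_real r\<^sub>2, 1:]"
    by (simp add: algebra_simps flip: of_real_mult of_real_add)
  have "poly_signature [:- (of_real d * of_real d), - of_real \<mu>, 1:] = int_sgn r\<^sub>1 + int_sgn r\<^sub>2"
    unfolding factor by (subst poly_signature_mult) (simp_all add: poly_signature_linear)
  also have "\<dots> = (if d = 0 then int_sgn \<mu> else 0)"
  proof (cases "d = 0")
    case True
    hence "r = \<bar>\<mu>\<bar>" unfolding r_def by simp
    thus ?thesis using True unfolding r\<^sub>1_def r\<^sub>2_def int_sgn_def by auto
  next
    case False
    have "\<bar>\<mu>\<bar> = sqrt (\<mu>\<^sup>2)" by simp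
    also have "\<dots> < r" unfolding r_def using False by (intro real_sqrt_less_mono) simp
    finally have "\<bar>\<mu>\<bar> < r" .
    thus ?thesis using False unfolding r\<^sub>1_def r\<^sub>2_def int_sgn_def by auto
  qed
  finally show ?thesis .
qed

lemma poly_signature_prod_quadratic:
  assumes "set ds \<subseteq> \<real>"
  shows "poly_signature (\<Prod>d\<leftarrow>ds. [:- (d * d), - of_real \<mu>, 1:]) = int (length (filter (\<lambda>d. d = 0) ds)) * int_sgn \<mu>"
  using assms
proof (induction ds)
  case Nil
  show ?case by (simp add: poly_signature_def root_count_def)
next
  case (Cons d ds)
  then obtain r where d: "d = of_real r" by (auto elim: Reals_cases)
  have "poly_signature (\<Prod>d\<leftarrow>d # ds. [:- (d * d), - of_real \<mu>, 1:]) =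
      poly_signature [:- (d * d), - of_real \<mu>, 1:] + poly_signature (\<Prod>d\<leftarrow>ds. [:- (d * d), - of_real \<mu>, 1:])"
    unfolding list.map prod_list.Cons by (rule poly_signature_mult) (auto simp: prod_list_zero_iff)
  thus ?case using Cons poly_signature_quadratic[of r \<mu>] by (simp add: d algebra_simps)
qed

lemma order_prod_linear: "Polynomial.order a (\<Prod>d\<leftarrow>ds. [:- d, 1:]) = length (filter (\<lambda>d. d = a) ds)"
proof (induction ds)
  case (Cons d ds)
  have linear: "Polynomial.order a [:- d, 1:] = (if d = a then 1 else 0)"
    using order_power_n_n[of a 1] by (auto intro: order_0I)
  have "(\<Prod>d\<leftarrow>ds. [:- d, 1:]) \<noteq> 0" by (auto simp: prod_list_zero_iff)
  hence nz: "[:- d, 1:] * (\<Prod>d\<leftarrow>ds. [:- d, 1:]) \<noteq> 0" by (simp only: mult_eq_0_iff) simp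
  show ?case using Cons linear unfolding list.map prod_list.Cons order_mult[OF nz] by simp
qed simp

text \<open>An eigenvalue \<open>d\<close> of \<open>X\<close> contributes the roots of \<open>t\<^sup>2 - \<mu> t - d\<^sup>2\<close> with
  \<open>\<mu> = A \<plusminus> S\<close>; they have opposite signs unless \<open>d = 0\<close>.\<close>
lemma hermitian_signature_metabolic_block:
  fixes X :: "complex mat" and A S :: real
  assumes X: "X \<in> carrier_mat n n" and herm: "hermitian_mat X" and b: "b * b = - (of_real S * of_real S)"
  shows "hermitian_signature (metabolic_block X (of_real A) b) =
    int (Polynomial.order 0 (char_poly X)) * (int_sgn (A + S) + int_sgn (A - S))"
proof -
  obtain ds where cpX: "char_poly X = (\<Prod>d\<leftarrow>ds. [:- d, 1:])"
    and cpXX: "char_poly (X * X) = (\<Prod>d\<leftarrow>ds. [:- (d * d), 1:])"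
    using char_poly_square_factorized[OF X] .
  have "set ds \<subseteq> \<real>"
    using hermitian_mat_eigenvalue_real[OF X herm] unfolding cpX by (auto simp: poly_prod_list_zero_iff)
  hence sig: "poly_signature (\<Prod>d\<leftarrow>ds. [:- (d * d), - of_real \<mu>, 1:]) =
      int (Polynomial.order 0 (char_poly X)) * int_sgn \<mu>" for \<mu>
    unfolding cpX order_prod_linear by (rule poly_signature_prod_quadratic)
  have cp: "char_poly (metabolic_block X (of_real A) b) =
      (\<Prod>d\<leftarrow>ds. [:- (d * d), - of_real (A + S), 1:]) * (\<Prod>d\<leftarrow>ds. [:- (d * d), - of_real (A - S), 1:])"
  proof -
    have s: "of_real S * of_real S = - (b * b)" using b by simp
    show ?thesis unfolding char_poly_metabolic_block[OF X s] cpXX pcompose_hom.hom_prod_list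
      by (simp add: o_def pcompose_pCons)
  qed
  have nz: "(\<Prod>d\<leftarrow>ds. [:- (d * d), - of_real \<mu>, 1:]) \<noteq> 0" for \<mu>
    by (auto simp: prod_list_zero_iff)
  show ?thesis
    unfolding hermitian_signature_char_poly cp poly_signature_mult[OF nz nz] sig by (simp add: algebra_simps)
qed

definition tl_form :: "complex \<Rightarrow> int mat \<Rightarrow> complex mat" where
  "tl_form \<omega> V = (1 - \<omega>) \<cdot>\<^sub>m map_mat of_int V + (1 - cnj \<omega>) \<cdot>\<^sub>m transpose_mat (map_mat of_int V)"

lemma tristram_levine_tl_form: "tristram_levine \<omega> V = hermitian_signature (tl_form \<omega> V)"
  unfolding tristram_levine_def tl_form_def Let_def ..

lemma tl_form_carrier: "V \<in> carrier_mat n n \<Longrightarrow> tl_form \<omega> V \<in> carrier_mat n n"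
  unfolding tl_form_def by auto

lemma hermitian_mat_tl_form: "V \<in> carrier_mat n n \<Longrightarrow> hermitian_mat (tl_form \<omega> V)"
  unfolding hermitian_mat_def tl_form_def by auto

lemma tl_form_metabolic_block:
  assumes "V \<in> carrier_mat n n"
  shows "tl_form \<omega> (metabolic_block V p q) =
    metabolic_block (tl_form \<omega> V) (of_real (2 * (1 - Re \<omega>) * of_int p)) ((cnj \<omega> - \<omega>) * of_int q)"
  using assms unfolding tl_form_def metabolic_block_def diag2_def scalar_block_def
  by (intro eq_matI) (auto simp: algebra_simps complex_eq_iff)

lemma det_tl_form_alexander_root:
  assumes V: "V \<in> carrier_mat n n" and \<omega>: "cmod \<omega> = 1"
    and root: "poly (map_poly of_int (alexander_poly V)) \<omega> = 0"
  shows "det (tl_form \<omega> V) = 0"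
proof -
  let ?V = "map_mat (of_int :: int \<Rightarrow> complex) V"
  define ev where "ev p = poly (map_poly of_int p) \<omega>" for p :: "int poly"
  have hom: "comm_ring_hom ev"
    unfolding ev_def by unfold_locales (auto simp: of_int_poly_hom.hom_add of_int_poly_hom.hom_mult)
  have "det (?V - \<omega> \<cdot>\<^sub>m transpose_mat ?V) =
      det (map_mat ev (map_mat (\<lambda>a. [:a:]) V - map_mat (\<lambda>a. [:0, a:]) (transpose_mat V)))"
    unfolding ev_def using V by (intro arg_cong[where f = det] eq_matI) (auto simp: of_int_hom.map_poly_pCons_hom)
  also have "\<dots> = 0"
    unfolding comm_ring_hom.hom_det[OF hom] using root unfolding ev_def alexander_poly_def .
  finally have singular: "det (?V - \<omega> \<cdot>\<^sub>m transpose_mat ?V) = 0" .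
  have "cnj \<omega> * \<omega> = 1"
    using \<omega> by (metis complex_norm_square mult.commute of_real_1 power_one)
  hence "transpose_mat (tl_form \<omega> V) = (1 - cnj \<omega>) \<cdot>\<^sub>m (?V - \<omega> \<cdot>\<^sub>m transpose_mat ?V)"
    unfolding tl_form_def using V by (intro eq_matI) (auto simp: algebra_simps)
  hence "det (transpose_mat (tl_form \<omega> V)) = 0" using singular by simp
  thus ?thesis using det_transpose[OF tl_form_carrier[OF V]] by simp
qed

lemma order_zero_char_poly_singular:
  fixes X :: "'a::field mat"
  assumes X: "X \<in> carrier_mat n n" and "det X = 0"
  shows "Polynomial.order 0 (char_poly X) > 0"
proof -
  have "char_matrix X 0 = X" using X unfolding char_matrix_def by (intro eq_matI) auto
  hence "poly (char_poly X) 0 = 0"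
    using assms eigenvalue_det[OF X] eigenvalue_root_char_poly[OF X] by simp
  moreover have "char_poly X \<noteq> 0"
    using degree_monic_char_poly[OF X] by auto
  ultimately show ?thesis by (simp add: order_root)
qed

definition tl_nullity :: "complex \<Rightarrow> int mat \<Rightarrow> nat" where
  "tl_nullity \<omega> V = Polynomial.order 0 (char_poly (tl_form \<omega> V))"

lemma tl_nullity_pos:
  assumes "V \<in> carrier_mat n n" and "cmod \<omega> = 1" and "poly (map_poly of_int (alexander_poly V)) \<omega> = 0"
  shows "tl_nullity \<omega> V > 0"
  unfolding tl_nullity_def
  by (rule order_zero_char_poly_singular[OF tl_form_carrier[OF assms(1)] det_tl_form_alexander_root[OF assms]])

definition upper_semicircle :: "complex set" where
  "upper_semicircle = {\<omega>. cmod \<omega> = 1 \<and> Im \<omega> > 0}"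

text \<open>For \<open>\<omega> = e\<^sup>i\<^sup>\<theta>\<close> this is \<open>cot (\<theta>/2)\<close>, strictly decreasing for \<open>0 < \<theta> < \<pi>\<close>.\<close>
definition cot_half_angle :: "complex \<Rightarrow> real" where
  "cot_half_angle \<omega> = Im \<omega> / (1 - Re \<omega>)"

lemma upper_semicircle_Re_less_1:
  assumes "\<omega> \<in> upper_semicircle"
  shows "Re \<omega> < 1"
proof -
  have "(Re \<omega>)\<^sup>2 + (Im \<omega>)\<^sup>2 = 1" and "(Im \<omega>)\<^sup>2 > 0"
    using assms cmod_power2[of \<omega>] unfolding upper_semicircle_def by auto
  hence "(Re \<omega>)\<^sup>2 < 1" by linarith
  thus ?thesis by (simp add: abs_square_less_1)
qed

lemma cot_half_angle_pos: "\<omega> \<in> upper_semicircle \<Longrightarrow> cot_half_angle \<omega> > 0"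
  using upper_semicircle_Re_less_1 unfolding cot_half_angle_def upper_semicircle_def by auto

lemma one_minus_Re_cot_half_angle:
  assumes "\<omega> \<in> upper_semicircle"
  shows "1 - Re \<omega> = 2 / ((cot_half_angle \<omega>)\<^sup>2 + 1)"
proof -
  have c: "1 - Re \<omega> > 0" using upper_semicircle_Re_less_1[OF assms] by simp
  have circle: "(Im \<omega>)\<^sup>2 + (1 - Re \<omega>)\<^sup>2 = 2 * (1 - Re \<omega>)"
    using assms cmod_power2[of \<omega>] unfolding upper_semicircle_def by (simp add: power2_diff)
  have "(cot_half_angle \<omega>)\<^sup>2 + 1 = ((Im \<omega>)\<^sup>2 + (1 - Re \<omega>)\<^sup>2) / (1 - Re \<omega>)\<^sup>2"
    using c unfolding cot_half_angle_def by (simp add: power_divide field_simps)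
  also have "\<dots> = 2 / (1 - Re \<omega>)"
  proof -
    have "2 * x / x\<^sup>2 = 2 / x" if "x > 0" for x :: real using that by (simp add: power2_eq_square)
    thus ?thesis unfolding circle using c by blast
  qed
  finally have cot: "(cot_half_angle \<omega>)\<^sup>2 + 1 = 2 / (1 - Re \<omega>)" .
  show ?thesis unfolding cot using c by simp
qed

lemma inj_on_cot_half_angle: "inj_on cot_half_angle upper_semicircle"
proof (rule inj_onI)
  fix \<omega> \<zeta> assume \<omega>: "\<omega> \<in> upper_semicircle" and \<zeta>: "\<zeta> \<in> upper_semicircle"
    and eq: "cot_half_angle \<omega> = cot_half_angle \<zeta>"
  have "Re \<omega> = Re \<zeta>"
    using one_minus_Re_cot_half_angle[OF \<omega>] one_minus_Re_cot_half_angle[OF \<zeta>] eq by simp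
  moreover have "Im \<omega> = cot_half_angle \<omega> * (1 - Re \<omega>)" "Im \<zeta> = cot_half_angle \<zeta> * (1 - Re \<zeta>)"
    using upper_semicircle_Re_less_1[OF \<omega>] upper_semicircle_Re_less_1[OF \<zeta>]
    unfolding cot_half_angle_def by simp_all
  ultimately show "\<omega> = \<zeta>" using eq by (simp add: complex_eq_iff)
qed

lemma inj_on_cot_half_angle_nth:
  assumes "distinct ws" and "set ws \<subseteq> upper_semicircle"
  shows "inj_on (\<lambda>i. cot_half_angle (ws ! i)) {..<length ws}"
proof -
  have "inj_on (nth ws) {..<length ws}" using assms(1) by (rule inj_on_nth) simp
  moreover have "nth ws ` {..<length ws} \<subseteq> upper_semicircle" using assms(2) by auto
  ultimately show ?thesis using comp_inj_on[OF _ inj_on_subset[OF inj_on_cot_half_angle]] by (simp add: o_def)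
qed

lemma tristram_levine_metabolic_block:
  assumes V: "V \<in> carrier_mat n n" and \<omega>: "\<omega> \<in> upper_semicircle" and p: "p > 0" and q: "q > 0"
  shows "tristram_levine \<omega> (metabolic_block V p q) = int (tl_nullity \<omega> V) * (1 + int_sgn (p / q - cot_half_angle \<omega>))"
proof -
  define A where "A = 2 * (1 - Re \<omega>) * p"
  define S where "S = 2 * Im \<omega> * q"
  have Re: "1 - Re \<omega> > 0" and Im: "Im \<omega> > 0"
    using upper_semicircle_Re_less_1[OF \<omega>] \<omega> unfolding upper_semicircle_def by auto
  have "(cnj \<omega> - \<omega>) * of_int q * ((cnj \<omega> - \<omega>) * of_int q) = - (of_real S * of_real S)"
    unfolding S_def by (simp add: complex_eq_iff algebra_simps)
  hence "tristram_levine \<omega> (metabolic_block V p q) = int (tl_nullity \<omega> V) * (int_sgn (A + S) + int_sgn (A - S))"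
    unfolding tristram_levine_tl_form tl_form_metabolic_block[OF V] A_def tl_nullity_def
    by (rule hermitian_signature_metabolic_block[OF tl_form_carrier[OF V] hermitian_mat_tl_form[OF V]])
  moreover have "A + S > 0" unfolding A_def S_def using Re Im p q by (intro add_pos_pos mult_pos_pos) auto
  moreover have "A - S = (2 * (1 - Re \<omega>) * q) * (p / q - cot_half_angle \<omega>)"
    unfolding A_def S_def cot_half_angle_def using Re q by (simp add: field_simps)
  ultimately show ?thesis
    using Re q by (simp add: int_sgn_mult_pos) (simp add: int_sgn_def)
qed

lemma sum_tristram_levine_metabolic_block:
  fixes p q :: int and c :: "nat \<Rightarrow> real"
  assumes V: "V \<in> carrier_mat n n" and upper: "set ws \<subseteq> upper_semicircle" and q: "q > 0"
    and j: "j < length ws" and below: "cot_half_angle (ws ! j) < p / q"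
    and above: "\<And>i. i < length ws \<Longrightarrow> i \<noteq> j \<Longrightarrow> c i \<noteq> 0 \<Longrightarrow> p / q < cot_half_angle (ws ! i)"
  shows "(\<Sum>i<length ws. c i * real_of_int (tristram_levine (ws ! i) (metabolic_block V p q))) =
    2 * c j * tl_nullity (ws ! j) V"
proof -
  have "0 < real_of_int p / real_of_int q"
    using below cot_half_angle_pos[of "ws ! j"] upper j by (meson nth_mem order.strict_trans subsetD)
  hence "p > 0" using q by (simp add: zero_less_divide_iff)
  have sig: "tristram_levine (ws ! i) (metabolic_block V p q) =
      int (tl_nullity (ws ! i) V) * (1 + int_sgn (p / q - cot_half_angle (ws ! i)))" if "i < length ws" for i
    using tristram_levine_metabolic_block[OF V subsetD[OF upper nth_mem[OF that]] \<open>p > 0\<close> q] .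
  have "(\<Sum>i<length ws. c i * real_of_int (tristram_levine (ws ! i) (metabolic_block V p q))) =
      (\<Sum>i\<in>{j}. c i * real_of_int (tristram_levine (ws ! i) (metabolic_block V p q)))"
    using j above sig by (intro sum.mono_neutral_right) (auto simp: int_sgn_def)
  also have "\<dots> = 2 * c j * tl_nullity (ws ! j) V" using sig[OF j] below by (simp add: int_sgn_def)
  finally show ?thesis .
qed

lemma metabolic_block_minus_transpose:
  assumes "V \<in> carrier_mat n n"
  shows "metabolic_block V p q - transpose_mat (metabolic_block V p q) = metabolic_block (V - transpose_mat V) 0 (2 * q)"
  using assms unfolding metabolic_block_def diag2_def scalar_block_def by (intro eq_matI) auto

lemma seifert_matrix_carrier: "seifert_matrix V \<Longrightarrow> V \<in> carrier_mat (dim_row V) (dim_row V)"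
  unfolding seifert_matrix_def carrier_mat_def by simp

lemma seifert_matrix_metabolic_block:
  assumes "seifert_matrix V"
  shows "seifert_matrix (metabolic_block V p q)"
proof -
  define n where "n = dim_row V"
  have V: "V \<in> carrier_mat n n" using seifert_matrix_carrier[OF assms] unfolding n_def .
  have E: "V - transpose_mat V \<in> carrier_mat n n" using V by auto
  have "det (V - transpose_mat V) ^ 4 = 1" using assms unfolding seifert_matrix_def by auto
  thus ?thesis
    using carrier_matD[OF metabolic_block_carrier[OF V, of p q]] unfolding seifert_matrix_def metabolic_block_minus_transpose[OF V]
    by (simp add: det_metabolic_block[OF E])
qed

definition coord_span :: "nat \<Rightarrow> nat \<Rightarrow> int vec set" where
  "coord_span N K = {v \<in> carrier_vec N. \<forall>j<N. K \<le> j \<longrightarrow> v $ j = 0}"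

lemma free_of_rank_coord_span:
  assumes K: "K \<le> N"
  shows "free_of_rank N K (coord_span N K)"
proof -
  define us :: "int vec list" where "us = map (unit_vec N) [0..<K]"
  have comb: "int_comb N us c = vec N (\<lambda>j. if j < K then c j else 0)" for c
  proof (rule eq_vecI)
    fix j assume "j < dim_vec (vec N (\<lambda>j. if j < K then c j else 0))"
    hence j: "j < N" by simp
    have "(\<Sum>i<K. c i * unit_vec N i $ j) = (\<Sum>i<K. if i = j then c i else 0)"
      using K j by (intro sum.cong) auto
    thus "int_comb N us c $ j = vec N (\<lambda>j. if j < K then c j else 0) $ j"
      unfolding int_comb_def us_def using j K by simp
  qed (simp add: int_comb_def)
  have "coord_span N K = range (int_comb N us)"
  proof (intro equalityI subsetI)
    fix v assume "v \<in> coord_span N K"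
    hence "v = int_comb N us (\<lambda>j. v $ j)"
      unfolding comb coord_span_def by (intro eq_vecI) auto
    thus "v \<in> range (int_comb N us)" by blast
  qed (auto simp: comb coord_span_def)
  moreover have "c i = 0" if "int_comb N us c = 0\<^sub>v N" and "i < K" for c i
    using arg_cong[OF that(1), of "\<lambda>v. v $ i"] that(2) K unfolding comb by simp
  ultimately show ?thesis
    unfolding free_of_rank_def us_def by (intro exI[of _ us]) (auto simp: us_def)
qed

lemma direct_summand_coord_span: "direct_summand N (coord_span N K)"
  unfolding direct_summand_def
proof (intro conjI exI[of _ "{v \<in> carrier_vec N. \<forall>j<N. j < K \<longrightarrow> v $ j = 0}"] ballI)
  show "int_submodule N (coord_span N K)" unfolding int_submodule_def coord_span_def by auto
  show "int_submodule N {v \<in> carrier_vec N. \<forall>j<N. j < K \<longrightarrow> v $ j = 0}" unfolding int_submodule_def by auto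
  show "coord_span N K \<inter> {v \<in> carrier_vec N. \<forall>j<N. j < K \<longrightarrow> v $ j = 0} = {0\<^sub>v N}"
    unfolding coord_span_def by (auto intro!: eq_vecI)
  fix x :: "int vec" assume x: "x \<in> carrier_vec N"
  have "x = vec N (\<lambda>j. if j < K then x $ j else 0) + vec N (\<lambda>j. if j < K then 0 else x $ j)"
    using x by (intro eq_vecI) auto
  thus "\<exists>l\<in>coord_span N K. \<exists>m\<in>{v \<in> carrier_vec N. \<forall>j<N. j < K \<longrightarrow> v $ j = 0}. x = l + m"
    unfolding coord_span_def by fastforce
qed

lemma metabolic_zero_corner:
  assumes W: "W \<in> carrier_mat (2 * g) (2 * g)" and zero: "\<And>i j. i < g \<Longrightarrow> j < g \<Longrightarrow> W $$ (i, j) = 0"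
  shows "metabolic W"
  unfolding metabolic_def
proof (intro exI[of _ g] exI[of _ "coord_span (2 * g) g"] conjI ballI)
  show "direct_summand (2 * g) (coord_span (2 * g) g)" by (rule direct_summand_coord_span)
  show "free_of_rank (2 * g) g (coord_span (2 * g) g)" by (rule free_of_rank_coord_span) simp
  fix x y assume x: "x \<in> coord_span (2 * g) g" and y: "y \<in> coord_span (2 * g) g"
  have "x $ i * (W $$ (i, j) * y $ j) = 0" if "i < 2 * g" "j < 2 * g" for i j
    using x y that zero by (cases "i < g"; cases "j < g") (auto simp: coord_span_def)
  thus "x \<bullet> (W *\<^sub>v y) = 0"
    using W x y by (auto simp: scalar_prod_def coord_span_def sum_distrib_left intro!: sum.neutral)
qed (use W in auto)

lemma metabolic_metabolic_block:
  assumes V: "V \<in> carrier_mat n n"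
  shows "metabolic (metabolic_block V p q)"
proof (rule metabolic_zero_corner[where g = "n + n"])
  show "metabolic_block V p q \<in> carrier_mat (2 * (n + n)) (2 * (n + n))"
    using metabolic_block_carrier[OF V] by (simp add: mult_2)
qed (use V in \<open>simp add: metabolic_block_def\<close>)

lemma exists_fraction_isolating_min:
  fixes \<kappa> :: "'a \<Rightarrow> real"
  assumes "finite J" and "J \<noteq> {}" and inj: "inj_on \<kappa> J"
  obtains j and p q :: int where "j \<in> J" and "q > 0" and "\<kappa> j < p / q" and "\<forall>i\<in>J - {j}. p / q < \<kappa> i"
proof -
  obtain j where j: "j \<in> J" and min: "\<forall>i\<in>J. \<kappa> j \<le> \<kappa> i"
    using ex_is_arg_min_if_finite[OF assms(1,2), of \<kappa>] unfolding is_arg_min_def by (auto simp: not_less)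
  define y where "y = Min (insert (\<kappa> j + 1) (\<kappa> ` (J - {j})))"
  have "\<kappa> j < \<kappa> i" if "i \<in> J - {j}" for i
    using min inj j that unfolding inj_on_def by (metis DiffE insertI1 order_le_neq_trans)
  hence "\<kappa> j < y" unfolding y_def using assms(1) by simp
  then obtain r where "r \<in> \<rat>" and r: "\<kappa> j < r" "r < y" using Rats_dense_in_real by blast
  then obtain p q :: int where "q > 0" and "r = p / q" by (metis Rats_cases')
  moreover have "\<forall>i\<in>J - {j}. r < \<kappa> i"
    using r(2) assms(1) unfolding y_def by auto
  ultimately show ?thesis using that j r(1) by blast
qed

lemma D_set_subset_upper_semicircle: "D_set \<subseteq> upper_semicircle"
  unfolding D_set_def upper_semicircle_def by auto

theorem theorem2:
  fixes ws :: "complex list" and c :: "nat \<Rightarrow> real"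
  assumes "distinct ws"
    and "set ws \<subseteq> D_set"
    and "\<forall>V. seifert_matrix V \<and> metabolic V \<longrightarrow>
           (\<Sum>i<length ws. c i * real_of_int (tristram_levine (ws ! i) V)) = 0"
  shows "\<forall>i<length ws. c i = 0"
proof (rule ccontr)
  assume "\<not> (\<forall>i<length ws. c i = 0)"
  define J where "J = {i. i < length ws \<and> c i \<noteq> 0}"
  define \<kappa> where "\<kappa> i = cot_half_angle (ws ! i)" for i
  have upper: "set ws \<subseteq> upper_semicircle" using assms(2) D_set_subset_upper_semicircle by auto
  have "finite J" and "J \<noteq> {}" unfolding J_def using \<open>\<not> (\<forall>i<length ws. c i = 0)\<close> by auto
  moreover have "inj_on \<kappa> J"
    using inj_on_cot_half_angle_nth[OF assms(1) upper] unfolding \<kappa>_def J_def by (rule inj_on_subset) auto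
  ultimately obtain j and p q :: int where j: "j \<in> J" and "q > 0" and "\<kappa> j < p / q"
    and "\<forall>i\<in>J - {j}. p / q < \<kappa> i"
    by (rule exists_fraction_isolating_min)
  hence jl: "j < length ws" and "c j \<noteq> 0" unfolding J_def by auto
  have "ws ! j \<in> D_set" using assms(2) jl by auto
  then obtain V where V: "seifert_matrix V" and root: "poly (map_poly of_int (alexander_poly V)) (ws ! j) = 0"
    unfolding D_set_def by auto
  note Vc = seifert_matrix_carrier[OF V]
  have "2 * c j * tl_nullity (ws ! j) V = 0"
    using sum_tristram_levine_metabolic_block[OF Vc upper \<open>q > 0\<close> jl, of p c] \<open>\<kappa> j < p / q\<close>
      \<open>\<forall>i\<in>J - {j}. p / q < \<kappa> i\<close> assms(3) seifert_matrix_metabolic_block[OF V] metabolic_metabolic_block[OF Vc]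
    unfolding \<kappa>_def J_def by auto
  moreover have "tl_nullity (ws ! j) V > 0"
    using tl_nullity_pos[OF Vc _ root] upper nth_mem[OF jl] unfolding upper_semicircle_def by auto
  ultimately show False using \<open>c j \<noteq> 0\<close> by simp
qed

end
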